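(* Let $n\ge 1$ and consider $n$ buckets, where bucket $i$ contains $x_i$ white balls and $y_i$ black balls ($x_i,y_i$ nonnegative integers). Let $A$ be the number of (unordered) pairs of balls lying in the same bucket and having different colors. Consider any procedure that repeatedly selects a bucket and removes from it one white and one black ball, until in every bucket either no balls remain or all remaining balls have the same color, and let $B$ be the number of steps performed. Then $A\ge B^2/n$. *)

theory Defs
  imports Complex_Main
begin

text \<open>A configuration of n buckets: x i white balls and y i black balls in bucket i (i < n).
  One step: pick a bucket i < n with at least one white and one black ball and remove one of each.\<close>

type_synonym config = "(nat \<Rightarrow> nat) \<times> (nat \<Rightarrow> nat)"

definition step :: "nat \<Rightarrow> config rel" where
  "step n = {((x, y), (x', y')). \<exists>i<n. x i \<ge> 1 \<and> y i \<ge> 1 \<and>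
              x' = x(i := x i - 1) \<and> y' = y(i := y i - 1)}"

definition terminal :: "nat \<Rightarrow> config \<Rightarrow> bool" where
  "terminal n c = (\<forall>i<n. fst c i = 0 \<or> snd c i = 0)"

definition bichromatic_pairs :: "nat \<Rightarrow> config \<Rightarrow> nat" where
  "bichromatic_pairs n c = (\<Sum>i<n. fst c i * snd c i)"

end

theory Submission
  imports Defs "HOL-Analysis.Convex"
begin

text \<open>If bucket \<open>i\<close> is chosen \<open>k i\<close> times, then \<open>k i \<le> min (x i) (y i)\<close>, so
  \<open>k i\<^sup>2 \<le> x i * y i\<close>; summing and applying Cauchy-Schwarz to \<open>B = \<Sum>i<n. k i\<close> gives
  \<open>B\<^sup>2 \<le> n * \<Sum>i<n. k i\<^sup>2 \<le> n * A\<close>.\<close>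

lemma step_relpow_removal_counts:
  assumes "((x, y), (x', y')) \<in> step n ^^ B"
  shows "\<exists>k. (\<forall>i<n. x i = x' i + k i \<and> y i = y' i + k i) \<and> (\<Sum>i<n. k i) = B"
  using assms
proof (induction B arbitrary: x' y')
  case 0
  then show ?case by (intro exI[of _ "\<lambda>_. 0"]) auto
next
  case (Suc B)
  then obtain x1 y1 where run: "((x, y), (x1, y1)) \<in> step n ^^ B"
    and last: "((x1, y1), (x', y')) \<in> step n" by auto
  obtain k where k: "\<forall>i<n. x i = x1 i + k i \<and> y i = y1 i + k i"
    and k_sum: "(\<Sum>i<n. k i) = B" using Suc.IH[OF run] by blast
  obtain j where j: "j < n" "x1 j \<ge> 1" "y1 j \<ge> 1"
    and x': "x' = x1(j := x1 j - 1)" and y': "y' = y1(j := y1 j - 1)"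
    using last unfolding step_def by auto
  define k' where "k' = k(j := Suc (k j))"
  have "\<forall>i<n. x i = x' i + k' i \<and> y i = y' i + k' i"
    using k j by (auto simp: k'_def x' y')
  moreover have "(\<Sum>i<n. k' i) = Suc B"
  proof -
    have "(\<Sum>i<n. k' i) = (\<Sum>i<n. k i + (if i = j then 1 else 0))"
      by (rule sum.cong) (auto simp: k'_def)
    then show ?thesis using j k_sum by (simp add: sum.distrib)
  qed
  ultimately show ?case by blast
qed

lemma sum_squares_le_bichromatic_pairs:
  assumes "\<And>i. i < n \<Longrightarrow> k i \<le> x i \<and> k i \<le> y i"
  shows "(\<Sum>i<n. (k i)\<^sup>2) \<le> bichromatic_pairs n (x, y)"
  unfolding bichromatic_pairs_def power2_eq_square
  using assms by (auto intro: sum_mono mult_le_mono)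

theorem lemma2:
  fixes n B :: nat and x y x' y' :: "nat \<Rightarrow> nat"
  assumes "n \<ge> 1"
    and "((x, y), (x', y')) \<in> (step n) ^^ B"
    and "terminal n (x', y')"
  shows "real (bichromatic_pairs n (x, y)) \<ge> real B ^ 2 / real n"
proof -
  obtain k where k: "\<forall>i<n. x i = x' i + k i \<and> y i = y' i + k i"
    and k_sum: "(\<Sum>i<n. k i) = B"
    using step_relpow_removal_counts[OF assms(2)] by blast
  have "real B ^ 2 = (\<Sum>i<n. real (k i))\<^sup>2"
    using k_sum by (simp flip: of_nat_sum)
  also have "\<dots> \<le> (\<Sum>i<n. (real (k i))\<^sup>2) * real n"
    using sum_squared_le_sum_of_squares[of "\<lambda>i. real (k i)" "{..<n}"] by simp
  also have "\<dots> \<le> real (bichromatic_pairs n (x, y)) * real n"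
    using sum_squares_le_bichromatic_pairs[of n k x y] k
    by (intro mult_right_mono) (auto simp flip: of_nat_power of_nat_sum)
  finally show ?thesis
    using assms(1) by (simp add: divide_le_eq)
qed

end
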